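(* For Lebesgue almost all $x\in(0,1)$, $\lim_{n\to\infty}\frac{\log M_n(x)}{\log n}=1$.
   Context: Signed Engel expansion: define $T\colon[0,1)\to[0,1)$ by: for $k\in\mathbb{N}$, $Tx=\lceil 1/x\rceil x-1$ if $x\in(\frac{1}{2k},\frac{1}{2k-1})$; $Tx=1-\lfloor 1/x\rfloor x$ if $x\in(\frac{1}{2k+1},\frac{1}{2k})$; $Tx=0$ if $x\in\{0\}\cup\{1/n\colon n\ge 2\}$. For $x\in(0,1)$, $d_1(x)=\lceil 1/x\rceil$ if $x\in[\frac{1}{2k},\frac{1}{2k-1})$ for some $k\in\mathbb{N}$, and $d_1(x)=\lfloor 1/x\rfloor$ if $x\in[\frac{1}{2k+1},\frac{1}{2k})$ for some $k\in\mathbb{N}$; $d_{n+1}(x)=d_1(T^nx)$. For irrational $x\in(0,1)$, $R_1(x)=d_1(x)$, $R_n(x)=d_n(x)/d_{n-1}(x)$ for $n\ge2$, and $M_n(x)=\max\{R_k(x)\colon 1\le k\le n\}$. *)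

theory Defs
  imports "HOL-Analysis.Analysis"
begin

text \<open>Signed Engel expansion map T on [0,1) (values outside [0,1) are irrelevant; set to 0).\<close>
definition sengel_T :: "real \<Rightarrow> real" where
  "sengel_T x =
     (if x = 0 \<or> (\<exists>n::nat. n \<ge> 2 \<and> x = 1 / real n) then 0
      else if \<exists>k::nat. k \<ge> 1 \<and> 1 / real (2*k) < x \<and> x < 1 / (real (2*k) - 1)
        then real_of_int \<lceil>1 / x\<rceil> * x - 1
      else if \<exists>k::nat. k \<ge> 1 \<and> 1 / real (2*k+1) < x \<and> x < 1 / real (2*k)
        then 1 - real_of_int \<lfloor>1 / x\<rfloor> * x
      else 0)"

definition sengel_d1 :: "real \<Rightarrow> int" where
  "sengel_d1 x =
     (if \<exists>k::nat. k \<ge> 1 \<and> 1 / real (2*k) \<le> x \<and> x < 1 / (real (2*k) - 1)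
      then \<lceil>1 / x\<rceil> else \<lfloor>1 / x\<rfloor>)"

definition sengel_d :: "nat \<Rightarrow> real \<Rightarrow> int" where
  "sengel_d n x = sengel_d1 ((sengel_T ^^ (n - 1)) x)"

definition sengel_R :: "nat \<Rightarrow> real \<Rightarrow> real" where
  "sengel_R n x = (if n \<le> 1 then real_of_int (sengel_d 1 x)
                   else real_of_int (sengel_d n x) / real_of_int (sengel_d (n - 1) x))"

definition sengel_M :: "nat \<Rightarrow> real \<Rightarrow> real" where
  "sengel_M n x = Max ((\<lambda>k. sengel_R k x) ` {1..n})"

end

(* On the level set {d = a}, a = 2(k+1), which is the interval (1/(2k+3), 1/(2k+1)], the map T is
   affine with slope a on each of two halves, mapping them onto (0, 1/(2k+3)) and [0, 1/(2k+1)].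
   Hence a set whose relative measure in every interval (0, 1/(2i+1)] is at most c has preimage
   with the same property.  Consequently, uniformly in the past, the ratio d_{n+1}/d_n exceeds s
   with probability at most 3/s, and stays below t with probability at most 1 - 1/(3t).
   Borel-Cantelli with s = n^p (p > 1) and t = n / (log n)^2 shows that almost surely
   n^(1-e) <= M_n <= n^(1+e) for all large n. *)

theory Submission
  imports Defs "HOL-Real_Asymp.Real_Asymp"
begin

text \<open>The digit is the even integer nearest to \<open>1/x\<close>, and \<open>T x = \<bar>d x * x - 1\<bar>\<close>.  On \<open>(0,1)\<close> these
  single formulas agree with \<open>sengel_d1\<close> and \<open>sengel_T\<close> except where \<open>1/x\<close> is an integer
  (\<open>sengel_T_d1_eq\<close>), which makes measurability and the branch computations straightforward.\<close>

definition sengel_digit :: "real \<Rightarrow> real" where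
  "sengel_digit x = 2 * of_int \<lfloor>(1/x + 1) / 2\<rfloor>"

definition sengel_map :: "real \<Rightarrow> real" where
  "sengel_map x = \<bar>sengel_digit x * x - 1\<bar>"

definition sengel_digits :: "nat \<Rightarrow> real \<Rightarrow> real" where
  "sengel_digits n x = sengel_digit ((sengel_map ^^ n) x)"

lemma sengel_digit_measurable [measurable]: "sengel_digit \<in> borel_measurable borel"
  unfolding sengel_digit_def by measurable

lemma sengel_map_measurable [measurable]: "sengel_map \<in> borel_measurable borel"
  unfolding sengel_map_def by measurable

lemma funpow_sengel_map_measurable [measurable]: "sengel_map ^^ n \<in> borel_measurable borel"
  by (induction n) auto

lemma sengel_digits_measurable [measurable]: "sengel_digits n \<in> borel_measurable borel"
  unfolding sengel_digits_def by measurable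

lemma sengel_digits_Suc: "sengel_digits (Suc n) x = sengel_digits n (sengel_map x)"
  unfolding sengel_digits_def by (simp only: funpow_Suc_right o_def)

lemma sengel_digit_le: "sengel_digit x \<le> 1/x + 1"
  using of_int_floor_le[of "(1/x + 1) / 2"] unfolding sengel_digit_def by (simp add: field_simps)

lemma sengel_digit_gt: "sengel_digit x > 1/x - 1"
  using real_of_int_floor_add_one_gt[of "(1/x + 1) / 2"] unfolding sengel_digit_def
  by (simp add: field_simps)

lemma sengel_digit_eq_iff:
  "sengel_digit x = 2 * (real k + 1) \<longleftrightarrow> x \<in> {1/(2*real k + 3)<..1/(2*real k + 1)}"
proof (cases "x > 0")
  case True
  have "sengel_digit x = 2 * (real k + 1) \<longleftrightarrow> \<lfloor>(1/x + 1) / 2\<rfloor> = int k + 1"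
    unfolding sengel_digit_def by (metis mult_cancel_left of_int_eq_iff of_int_of_nat_eq
        of_int_add of_int_1 zero_neq_numeral)
  also have "\<dots> \<longleftrightarrow> 2 * real k + 1 \<le> 1/x \<and> 1/x < 2 * real k + 3"
    by (simp add: floor_eq_iff field_simps)
  also have "\<dots> \<longleftrightarrow> x \<in> {1/(2*real k + 3)<..1/(2*real k + 1)}"
    using True by (auto simp: field_simps)
  finally show ?thesis .
next
  case False
  then have "1/x \<le> 0" by (simp add: divide_nonpos_pos)
  moreover have "real k \<ge> 0" by simp
  ultimately have "sengel_digit x < 2 * (real k + 1)" using sengel_digit_le[of x] by argo
  moreover have "x \<notin> {1/(2*real k + 3)<..1/(2*real k + 1)}"
    using False divide_pos_pos[of 1 "2*real k + 3"] by (simp only: greaterThanAtMost_iff) linarith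
  ultimately show ?thesis by simp
qed

lemma sengel_digit_exists:
  assumes "0 < x" "x \<le> 1"
  shows "\<exists>k::nat. sengel_digit x = 2 * (real k + 1)"
proof -
  have "1 \<le> 1/x" using assms by (simp add: field_simps)
  then have "1 \<le> \<lfloor>(1/x + 1) / 2\<rfloor>" by (simp add: le_floor_iff)
  then obtain k :: nat where "\<lfloor>(1/x + 1) / 2\<rfloor> = int k + 1"
    by (metis add.commute zle_iff_zadd)
  then show ?thesis unfolding sengel_digit_def by (intro exI[of _ k]) simp
qed

lemma sengel_map_le: "0 < x \<Longrightarrow> sengel_map x \<le> x"
  using sengel_digit_le[of x] sengel_digit_gt[of x]
  unfolding sengel_map_def by (auto simp: field_simps abs_le_iff)

lemma ceiling_inverse_eq:
  fixes k :: nat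
  assumes "k \<ge> 1" "2 * real k - 1 < 1/x" "1/x \<le> 2 * real k"
  shows "\<lceil>1/x\<rceil> = 2 * int k"
  by (rule ceiling_unique) (use assms in auto)

lemma sengel_T_d1_ceiling_branch:
  fixes k :: nat
  assumes k: "k \<ge> 1" and x: "2 * real k - 1 < 1/x" "1/x < 2 * real k"
  shows "sengel_T x = 2 * real k * x - 1" "sengel_d1 x = 2 * int k"
proof -
  have "0 < 1/x" using k x by linarith
  then have "0 < x" by simp
  have ceiling: "\<lceil>1/x\<rceil> = 2 * int k" by (rule ceiling_inverse_eq) (use k x in auto)
  have not_inverse: "x \<noteq> 1 / real n" for n :: nat
  proof
    assume "x = 1 / real n"
    then have "\<lceil>1/x\<rceil> = int n" by simp
    then show False using ceiling x(2) \<open>x = 1 / real n\<close> by simp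
  qed
  have "1 / real (2*k) < x \<and> x < 1 / (real (2*k) - 1)"
    using x k \<open>0 < x\<close> by (auto simp: field_simps)
  then show "sengel_T x = 2 * real k * x - 1" "sengel_d1 x = 2 * int k"
    using k not_inverse \<open>0 < x\<close> ceiling unfolding sengel_T_def sengel_d1_def
    by (auto intro!: exI[of _ k])
qed

lemma sengel_T_d1_floor_branch:
  fixes k :: nat
  assumes k: "k \<ge> 1" and x: "2 * real k < 1/x" "1/x < 2 * real k + 1"
  shows "sengel_T x = 1 - 2 * real k * x" "sengel_d1 x = 2 * int k"
proof -
  have "0 < 1/x" using k x by linarith
  then have "0 < x" by simp
  have floor: "\<lfloor>1/x\<rfloor> = 2 * int k" by (rule floor_unique) (use x in auto)
  have ceiling: "\<lceil>1/x\<rceil> = 2 * int k + 1" by (rule ceiling_unique) (use x in auto)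
  have not_inverse: "x \<noteq> 1 / real n" for n :: nat
  proof
    assume "x = 1 / real n"
    then have "\<lfloor>1/x\<rfloor> = int n" by simp
    then show False using floor x(1) \<open>x = 1 / real n\<close> by simp
  qed
  have not_ceiling_branch: "\<not> (1 / real (2*k') \<le> x \<and> x < 1 / (real (2*k') - 1))" if "k' \<ge> 1" for k'
  proof
    assume "1 / real (2*k') \<le> x \<and> x < 1 / (real (2*k') - 1)"
    then have "2 * real k' - 1 < 1/x" "1/x \<le> 2 * real k'"
      using that \<open>0 < x\<close> by (auto simp: field_simps)
    then have "\<lceil>1/x\<rceil> = 2 * int k'" by (rule ceiling_inverse_eq[OF that])
    then show False using ceiling by presburger
  qed
  have "1 / real (2*k+1) < x \<and> x < 1 / real (2*k)"
    using x k \<open>0 < x\<close> by (auto simp: field_simps)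
  then show "sengel_T x = 1 - 2 * real k * x" "sengel_d1 x = 2 * int k"
    using k not_inverse not_ceiling_branch \<open>0 < x\<close> floor unfolding sengel_T_def sengel_d1_def
    by (auto intro!: exI[of _ k] dest: less_imp_le)
qed

lemma sengel_T_d1_eq:
  assumes x: "0 < x" "x < 1" "1/x \<notin> \<int>"
  shows "sengel_T x = sengel_map x" "sengel_d1 x = sengel_digit x"
proof -
  obtain k :: nat where k: "sengel_digit x = 2 * (real k + 1)"
    using sengel_digit_exists x by fastforce
  then have "2 * real (k+1) - 1 \<le> 1/x" "1/x < 2 * real (k+1) + 1"
    using x unfolding sengel_digit_eq_iff by (auto simp: field_simps)
  moreover have "2 * real (k+1) - 1 \<in> \<int>" "2 * real (k+1) \<in> \<int>"
    by (simp_all only: Ints_of_nat Ints_diff Ints_1 Ints_mult Ints_numeral)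
  then have "1/x \<noteq> 2 * real (k+1) - 1" "1/x \<noteq> 2 * real (k+1)"
    using x(3) by auto
  ultimately consider "2 * real (k+1) - 1 < 1/x \<and> 1/x < 2 * real (k+1)"
    | "2 * real (k+1) < 1/x \<and> 1/x < 2 * real (k+1) + 1"
    by fastforce
  then have "sengel_T x = sengel_map x \<and> sengel_d1 x = sengel_digit x"
  proof cases
    case 1
    then have "1 < 2 * real (k+1) * x" using x by (simp add: field_simps)
    then have "sengel_map x = 2 * real (k+1) * x - 1" unfolding sengel_map_def k by (simp add: algebra_simps)
    then show ?thesis using sengel_T_d1_ceiling_branch[of "k+1" x] 1 k by auto
  next
    case 2
    then have "2 * real (k+1) * x < 1" using x by (simp add: field_simps)
    then have "sengel_map x = 1 - 2 * real (k+1) * x" unfolding sengel_map_def k by (simp add: algebra_simps)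
    then show ?thesis using sengel_T_d1_floor_branch[of "k+1" x] 2 k by auto
  qed
  then show "sengel_T x = sengel_map x" "sengel_d1 x = sengel_digit x" by auto
qed

lemma sengel_map_irrational:
  assumes x: "x \<in> {0<..<1} - \<rat>"
  shows "sengel_map x \<in> {0<..<1} - \<rat>"
proof -
  obtain k :: nat where k: "sengel_digit x = 2 * (real k + 1)"
    using sengel_digit_exists x by fastforce
  have "sengel_digit x * x - 1 \<notin> \<rat>"
  proof
    assume "sengel_digit x * x - 1 \<in> \<rat>"
    then have "(sengel_digit x * x - 1 + 1) / sengel_digit x \<in> \<rat>"
      unfolding k by (intro Rats_divide Rats_add) auto
    then show False using x k by simp
  qed
  then have "sengel_map x \<notin> \<rat>"
    unfolding sengel_map_def by (metis Rats_minus_iff abs_if)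
  moreover from this have "sengel_map x \<noteq> 0" by auto
  then have "0 < sengel_map x" unfolding sengel_map_def by simp
  moreover have "sengel_map x < 1" using sengel_map_le[of x] x by auto
  ultimately show ?thesis by simp
qed

lemma funpow_sengel_map_irrational:
  assumes "x \<in> {0<..<1} - \<rat>"
  shows "(sengel_map ^^ n) x \<in> {0<..<1} - \<rat>"
proof (induction n)
  case (Suc n)
  then show ?case using sengel_map_irrational[OF Suc.IH] by simp
qed (use assms in simp)

lemma sengel_d_eq_sengel_digits:
  assumes x: "x \<in> {0<..<1} - \<rat>"
  shows "real_of_int (sengel_d (Suc n) x) = sengel_digits n x"
proof -
  have inverse_not_int: "1/y \<notin> \<int>" if "y \<notin> \<rat>" for y :: real
    using that Ints_subset_Rats Rats_inverse by (metis inverse_eq_divide inverse_inverse_eq subsetD)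
  have "(sengel_T ^^ n) x = (sengel_map ^^ n) x"
    using funpow_sengel_map_irrational[OF x] sengel_T_d1_eq inverse_not_int
    by (induction n) auto
  then show ?thesis
    using funpow_sengel_map_irrational[OF x, of n] sengel_T_d1_eq inverse_not_int
    unfolding sengel_d_def sengel_digits_def by auto
qed

lemma sengel_digits_ge_2:
  assumes "x \<in> {0<..<1} - \<rat>"
  shows "sengel_digits n x \<ge> 2"
proof -
  obtain k :: nat where "sengel_digits n x = 2 * (real k + 1)"
    using sengel_digit_exists funpow_sengel_map_irrational[OF assms, of n]
    unfolding sengel_digits_def by fastforce
  then show ?thesis by simp
qed

lemma sengel_R_eq:
  assumes "x \<in> {0<..<1} - \<rat>"
  shows "sengel_R 1 x = sengel_digits 0 x"
    and "sengel_R (Suc (Suc n)) x = sengel_digits (Suc n) x / sengel_digits n x"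
  unfolding sengel_R_def using sengel_d_eq_sengel_digits[OF assms] by simp_all

lemma emeasure_lborel_affine_preimage:
  fixes c t :: real
  assumes "c \<noteq> 0" and [measurable]: "X \<in> sets borel"
  shows "emeasure lborel {x. t + c * x \<in> X} = ennreal (1/\<bar>c\<bar>) * emeasure lborel X"
proof -
  have "emeasure lborel X = ennreal \<bar>c\<bar> * emeasure lborel {x. t + c * x \<in> X}"
    by (subst lborel_real_affine[OF assms(1), of t])
       (simp add: emeasure_density nn_integral_cmult_indicator emeasure_distr vimage_def)
  then have "ennreal (1/\<bar>c\<bar>) * emeasure lborel X
      = (ennreal (1/\<bar>c\<bar>) * ennreal \<bar>c\<bar>) * emeasure lborel {x. t + c * x \<in> X}"
    by (simp add: mult.assoc)
  also have "ennreal (1/\<bar>c\<bar>) * ennreal \<bar>c\<bar> = 1"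
    using assms(1) by (simp add: ennreal_mult[symmetric])
  finally show ?thesis by simp
qed

lemma emeasure_lborel_eq_except_point:
  assumes "A \<in> sets borel" "B \<in> sets borel" "A - {p} = B - {p}"
  shows "emeasure lborel A = emeasure lborel B"
proof (rule emeasure_eq_AE)
  show "AE x in lborel. x \<in> A \<longleftrightarrow> x \<in> B"
    using AE_lborel_singleton[of p] by eventually_elim (use assms(3) in blast)
qed (use assms in auto)

lemma level_preimage_eq_branches:
  fixes k :: nat
  defines "a \<equiv> 2 * (real k + 1)"
  shows "{x. sengel_digit x = a} \<inter> {x. sengel_map x \<in> E} =
    {x. 1 - a * x \<in> E \<inter> {0<..<1/(2*real k + 3)}} \<union> {x. a * x - 1 \<in> E \<inter> {0..1/(2*real k + 1)}}"
proof -
  have a: "a > 0" unfolding a_def by simp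
  have "1 - 1/(2*real k + 3) = a * (1/(2*real k + 3))" "1 + 1/(2*real k + 1) = a * (1/(2*real k + 1))"
    unfolding a_def by (simp_all add: field_simps)
  then have "1 - a*x < 1/(2*real k + 3) \<longleftrightarrow> 1/(2*real k + 3) < x"
    and "a*x - 1 \<le> 1/(2*real k + 1) \<longleftrightarrow> x \<le> 1/(2*real k + 1)" for x
    using mult_less_cancel_left_pos[OF a, of "1/(2*real k + 3)" x]
      mult_le_cancel_left_pos[OF a, of x "1/(2*real k + 1)"] by linarith+
  moreover have "0 < 1 - a*x \<longleftrightarrow> x < 1/a" "0 \<le> a*x - 1 \<longleftrightarrow> 1/a \<le> x" for x
    using a by (simp_all add: field_simps)
  ultimately have left: "1 - a*x \<in> {0<..<1/(2*real k + 3)} \<longleftrightarrow> x \<in> {1/(2*real k + 3)<..<1/a}"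
    and right: "a*x - 1 \<in> {0..1/(2*real k + 1)} \<longleftrightarrow> x \<in> {1/a..1/(2*real k + 1)}" for x
    by auto
  have halves: "{1/(2*real k + 3)<..1/(2*real k + 1)} = {1/(2*real k + 3)<..<1/a} \<union> {1/a..1/(2*real k + 1)}"
    by (rule ivl_disj_un_two(5)[symmetric]) (auto simp: a_def field_simps)
  have level: "sengel_digit x = a \<longleftrightarrow> x \<in> {1/(2*real k + 3)<..<1/a} \<or> x \<in> {1/a..1/(2*real k + 1)}"
    for x unfolding a_def sengel_digit_eq_iff halves[unfolded a_def] by blast
  have "1 - a*x \<in> E \<inter> {0<..<1/(2*real k + 3)} \<longleftrightarrow> x \<in> {1/(2*real k + 3)<..<1/a} \<and> sengel_map x \<in> E" for x
  proof -
    have "x \<in> {1/(2*real k + 3)<..<1/a} \<Longrightarrow> sengel_map x = 1 - a*x"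
      using level[of x] a unfolding sengel_map_def by (simp add: field_simps)
    then show ?thesis using left[of x] by auto
  qed
  moreover have "a*x - 1 \<in> E \<inter> {0..1/(2*real k + 1)} \<longleftrightarrow> x \<in> {1/a..1/(2*real k + 1)} \<and> sengel_map x \<in> E" for x
  proof -
    have "x \<in> {1/a..1/(2*real k + 1)} \<Longrightarrow> sengel_map x = a*x - 1"
      using level[of x] a unfolding sengel_map_def by (simp add: field_simps)
    then show ?thesis using right[of x] by auto
  qed
  ultimately show ?thesis using level by blast
qed

lemma emeasure_level_preimage:
  fixes k :: nat
  assumes [measurable]: "E \<in> sets borel"
  shows "emeasure lborel ({x. sengel_digit x = 2 * (real k + 1)} \<inter> {x. sengel_map x \<in> E}) =
    ennreal (1 / (2 * (real k + 1))) *
      (emeasure lborel (E \<inter> {0<..1/(2*real k + 3)}) + emeasure lborel (E \<inter> {0<..1/(2*real k + 1)}))"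
proof -
  define a where "a = 2 * (real k + 1)"
  define L where "L = E \<inter> {0<..<1/(2*real k + 3)}"
  define R where "R = E \<inter> {0..1/(2*real k + 1)}"
  have a: "a \<noteq> 0" "\<bar>a\<bar> = a" unfolding a_def by simp_all
  have L: "L \<in> sets borel" and R: "R \<in> sets borel" unfolding L_def R_def by measurable
  have "{x. 1 - a * x \<in> L} \<in> sets lborel" "{x. a * x - 1 \<in> R} \<in> sets lborel"
    using L R by measurable
  moreover have "{x. 1 - a * x \<in> L} \<inter> {x. a * x - 1 \<in> R} = {}" unfolding L_def R_def by auto
  ultimately have "emeasure lborel ({x. sengel_digit x = a} \<inter> {x. sengel_map x \<in> E})
      = emeasure lborel {x. 1 - a * x \<in> L} + emeasure lborel {x. a * x - 1 \<in> R}"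
    unfolding a_def L_def R_def level_preimage_eq_branches by (rule plus_emeasure[symmetric])
  also have "emeasure lborel {x. 1 - a * x \<in> L} = ennreal (1/a) * emeasure lborel L"
    using emeasure_lborel_affine_preimage[of "-a" L 1, OF _ L] a by simp
  also have "emeasure lborel L = emeasure lborel (E \<inter> {0<..1/(2*real k + 3)})"
    unfolding L_def by (rule emeasure_lborel_eq_except_point[where p="1/(2*real k + 3)"]) auto
  also have "emeasure lborel {x. a * x - 1 \<in> R} = ennreal (1/a) * emeasure lborel R"
    using emeasure_lborel_affine_preimage[of a R "-1", OF _ R] a by simp
  also have "emeasure lborel R = emeasure lborel (E \<inter> {0<..1/(2*real k + 1)})"
    unfolding R_def by (rule emeasure_lborel_eq_except_point[where p=0]) auto
  finally show ?thesis unfolding a_def by (simp add: distrib_left)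
qed

lemma emeasure_level:
  fixes k :: nat
  shows "emeasure lborel {x. sengel_digit x = 2 * (real k + 1)} =
    ennreal (1 / (2 * (real k + 1)) * (1/(2*real k + 3) + 1/(2*real k + 1)))"
  using emeasure_level_preimage[of UNIV k]
  by (simp add: ennreal_plus[symmetric] ennreal_mult[symmetric] del: ennreal_plus)

lemma sengel_digit_eq_imp_in_Ioc_iff:
  fixes k i :: nat
  assumes "sengel_digit x = 2 * (real k + 1)"
  shows "x \<in> {0<..1/(2*real i + 1)} \<longleftrightarrow> i \<le> k"
proof -
  have x: "1/(2*real k + 3) < x" "x \<le> 1/(2*real k + 1)"
    using assms unfolding sengel_digit_eq_iff by auto
  show ?thesis
  proof
    assume "x \<in> {0<..1/(2*real i + 1)}"
    then have "1/(2*real k + 3) < 1/(2*real i + 1)" using x by simp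
    then show "i \<le> k" by (simp add: field_simps)
  next
    assume "i \<le> k"
    then have "1/(2*real k + 1) \<le> 1/(2*real i + 1)" by (simp add: field_simps)
    moreover have "0 < 1/(2*real k + 3)" by simp
    ultimately show "x \<in> {0<..1/(2*real i + 1)}"
      using x by (simp only: greaterThanAtMost_iff) linarith
  qed
qed

lemma Ioc_inverse_odd_subset: "{0<..1/(2*real i + 1)} \<subseteq> {0<..1::real}"
  using order_trans[of _ "1/(2*real i + 1)" 1] by auto

definition digit_set :: "nat set \<Rightarrow> real set" where
  "digit_set K = {x. \<exists>k\<in>K. sengel_digit x = 2 * (real k + 1)}"

lemma digit_set_measurable [measurable]: "digit_set K \<in> sets borel"
  unfolding digit_set_def by measurable

lemma digit_set_UNIV: "digit_set UNIV = {0<..1}"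
proof -
  have "x \<in> {0<..1}" if x: "x \<in> digit_set UNIV" for x
  proof -
    obtain k :: nat where "sengel_digit x = 2 * (real k + 1)"
      using x unfolding digit_set_def by blast
    then show ?thesis
      using sengel_digit_eq_imp_in_Ioc_iff[of x k 0] by simp
  qed
  then show ?thesis unfolding digit_set_def using sengel_digit_exists by auto
qed

text \<open>The interval \<open>(0, 1/(2i+1)]\<close> is the disjoint union of the level sets with \<open>k \<ge> i\<close>, and by
  \<open>emeasure_level_preimage\<close> the preimage of \<open>F k\<close> fills at most the proportion \<open>c\<close> of level set \<open>k\<close>.\<close>

lemma emeasure_branch_preimage_le:
  fixes K :: "nat set" and F :: "nat \<Rightarrow> real set" and c :: real and i :: nat
  assumes [measurable]: "\<And>k. F k \<in> sets borel" and "c \<ge> 0"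
    and F3: "\<And>k. k \<in> K \<Longrightarrow> emeasure lborel (F k \<inter> {0<..1/(2*real k + 3)}) \<le> ennreal (c/(2*real k + 3))"
    and F1: "\<And>k. k \<in> K \<Longrightarrow> emeasure lborel (F k \<inter> {0<..1/(2*real k + 1)}) \<le> ennreal (c/(2*real k + 1))"
  shows "emeasure lborel ({0<..1/(2*real i + 1)} \<inter>
           {x. \<exists>k\<in>K. sengel_digit x = 2 * (real k + 1) \<and> sengel_map x \<in> F k})
     \<le> ennreal c * emeasure lborel ({0<..1/(2*real i + 1)} \<inter> digit_set K)"
proof -
  define L where "L k = (if k \<in> K \<and> i \<le> k then {x. sengel_digit x = 2 * (real k + 1)} else {})" for k
  define A where "A k = L k \<inter> {x. sengel_map x \<in> F k}" for k
  have [measurable]: "L k \<in> sets borel" for k unfolding L_def by auto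
  then have measurable_families: "range A \<subseteq> sets lborel" "range L \<subseteq> sets lborel" unfolding A_def by auto
  have disjoint: "disjoint_family A" "disjoint_family L"
    unfolding disjoint_family_on_def A_def L_def by auto
  have unions: "{0<..1/(2*real i + 1)} \<inter> {x. \<exists>k\<in>K. sengel_digit x = 2 * (real k + 1) \<and> sengel_map x \<in> F k}
      = (\<Union>k. A k)"
    "{0<..1/(2*real i + 1)} \<inter> digit_set K = (\<Union>k. L k)"
    unfolding A_def L_def digit_set_def using sengel_digit_eq_imp_in_Ioc_iff
    by (auto split: if_splits)
  have "emeasure lborel (A k) \<le> ennreal c * emeasure lborel (L k)" for k
  proof (cases "k \<in> K \<and> i \<le> k")
    case True
    have "emeasure lborel (A k) = ennreal (1 / (2 * (real k + 1))) *
        (emeasure lborel (F k \<inter> {0<..1/(2*real k + 3)}) + emeasure lborel (F k \<inter> {0<..1/(2*real k + 1)}))"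
      unfolding A_def L_def using True emeasure_level_preimage[of "F k" k] by simp
    also have "\<dots> \<le> ennreal (1 / (2 * (real k + 1))) * (ennreal (c/(2*real k + 3)) + ennreal (c/(2*real k + 1)))"
      using True by (intro mult_left_mono add_mono F1 F3) auto
    also have "\<dots> = ennreal c * ennreal (1 / (2 * (real k + 1)) * (1/(2*real k + 3) + 1/(2*real k + 1)))"
      using \<open>c \<ge> 0\<close> by (simp add: ennreal_plus[symmetric] ennreal_mult[symmetric] field_simps del: ennreal_plus)
    also have "\<dots> = ennreal c * emeasure lborel (L k)"
      unfolding L_def using True emeasure_level[of k] by simp
    finally show ?thesis .
  qed (auto simp: A_def L_def)
  then have "(\<Sum>k. emeasure lborel (A k)) \<le> (\<Sum>k. ennreal c * emeasure lborel (L k))"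
    by (intro suminf_le) auto
  then show ?thesis
    unfolding unions using disjoint measurable_families by (simp add: suminf_emeasure)
qed

text \<open>The intervals \<open>(0, 1/(2i+1)]\<close> are the images of the halves of the level sets, which makes
  this density bound invariant under preimages of the map (\<open>density_le_preimage\<close>).\<close>

definition density_le :: "real \<Rightarrow> real set \<Rightarrow> bool" where
  "density_le c E \<longleftrightarrow>
     (\<forall>i::nat. emeasure lborel (E \<inter> {0<..1/(2*real i + 1)}) \<le> ennreal (c/(2*real i + 1)))"

lemma density_le_subset:
  assumes "density_le c E'" "E' \<in> sets borel" "E \<inter> {0<..1} \<subseteq> E'"
  shows "density_le c E"
  unfolding density_le_def
proof
  fix i :: nat
  have "E \<inter> {0<..1/(2*real i + 1)} \<subseteq> E' \<inter> {0<..1/(2*real i + 1)}"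
    using assms(3) Ioc_inverse_odd_subset[of i] by auto
  then have "emeasure lborel (E \<inter> {0<..1/(2*real i + 1)}) \<le> emeasure lborel (E' \<inter> {0<..1/(2*real i + 1)})"
    using assms(2) by (intro emeasure_mono) auto
  also have "\<dots> \<le> ennreal (c/(2*real i + 1))"
    using assms(1) unfolding density_le_def by blast
  finally show "emeasure lborel (E \<inter> {0<..1/(2*real i + 1)}) \<le> ennreal (c/(2*real i + 1))" .
qed

lemma density_le_branch_preimage:
  fixes F :: "nat \<Rightarrow> real set" and c :: real
  assumes [measurable]: "\<And>k. F k \<in> sets borel" and "c \<ge> 0"
    and "\<And>k. emeasure lborel (F k \<inter> {0<..1/(2*real k + 3)}) \<le> ennreal (c/(2*real k + 3))"
    and "\<And>k. emeasure lborel (F k \<inter> {0<..1/(2*real k + 1)}) \<le> ennreal (c/(2*real k + 1))"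
  shows "density_le c {x. \<exists>k. sengel_digit x = 2 * (real k + 1) \<and> sengel_map x \<in> F k}"
  unfolding density_le_def
proof
  fix i :: nat
  have "emeasure lborel ({x. \<exists>k. sengel_digit x = 2 * (real k + 1) \<and> sengel_map x \<in> F k} \<inter> {0<..1/(2*real i + 1)})
      \<le> ennreal c * emeasure lborel ({0<..1/(2*real i + 1)} \<inter> digit_set UNIV)"
    using emeasure_branch_preimage_le[of F c UNIV i] assms by (simp add: Int_commute)
  also have "{0<..1/(2*real i + 1)} \<inter> digit_set UNIV = {0<..1/(2*real i + 1)}"
    unfolding digit_set_UNIV by (auto simp: field_simps)
  finally show "emeasure lborel ({x. \<exists>k. sengel_digit x = 2 * (real k + 1) \<and> sengel_map x \<in> F k}
      \<inter> {0<..1/(2*real i + 1)}) \<le> ennreal (c/(2*real i + 1))"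
    using \<open>c \<ge> 0\<close> by (simp add: ennreal_mult[symmetric])
qed

lemma density_le_preimage:
  assumes [measurable]: "E \<in> sets borel" and "c \<ge> 0" "density_le c E"
  shows "density_le c {x. sengel_map x \<in> E}"
proof (rule density_le_subset)
  show "density_le c {x. \<exists>k. sengel_digit x = 2 * (real k + 1) \<and> sengel_map x \<in> E}"
    using assms by (intro density_le_branch_preimage) (auto simp: density_le_def algebra_simps
        dest: spec[of _ "Suc _"])
  show "{x. sengel_map x \<in> E} \<inter> {0<..1} \<subseteq> {x. \<exists>k. sengel_digit x = 2 * (real k + 1) \<and> sengel_map x \<in> E}"
    using sengel_digit_exists by auto
qed measurable

lemma density_le_funpow:
  assumes [measurable]: "E \<in> sets borel" and "c \<ge> 0" "density_le c E"
  shows "density_le c {x. (sengel_map ^^ n) x \<in> E}"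
proof (induction n)
  case (Suc n)
  have "{x. (sengel_map ^^ Suc n) x \<in> E} = {x. sengel_map x \<in> {y. (sengel_map ^^ n) y \<in> E}}"
    by (simp only: funpow_Suc_right o_def mem_Collect_eq)
  also have "density_le c \<dots>"
    by (rule density_le_preimage[OF _ \<open>c \<ge> 0\<close> Suc]) measurable
  finally show ?case .
qed (use assms in simp)

lemma emeasure_digit_gt_le:
  fixes s j :: real and k :: nat
  assumes s: "s \<ge> 1" and j: "0 < j" "j \<le> 2*real k + 3"
  shows "emeasure lborel ({y. s * (2 * (real k + 1)) < sengel_digit y} \<inter> {0<..1/j}) \<le> ennreal ((3/s)/j)"
proof -
  define a where "a = s * (2 * (real k + 1))"
  have "2 \<le> a" unfolding a_def using s by (simp add: mult_mono[of 1 s 2 "2 * (real k + 1)", simplified])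
  have "{y. a < sengel_digit y} \<inter> {0<..1/j} \<subseteq> {0<..<1/(a - 1)}"
  proof
    fix y assume y: "y \<in> {y. a < sengel_digit y} \<inter> {0<..1/j}"
    then have "a - 1 < 1/y" using sengel_digit_le[of y] by auto
    then show "y \<in> {0<..<1/(a - 1)}" using y \<open>2 \<le> a\<close> by (auto simp: field_simps)
  qed
  then have "emeasure lborel ({y. a < sengel_digit y} \<inter> {0<..1/j}) \<le> emeasure lborel {0<..<1/(a - 1)}"
    by (intro emeasure_mono) auto
  also have "\<dots> = ennreal (1/(a - 1))" using \<open>2 \<le> a\<close> by simp
  also have "\<dots> \<le> ennreal ((3/s)/j)"
  proof (rule ennreal_leI)
    have "3 * (a - 1) = s * (2*real k + 3) + (4 * (s * real k) + 3 * (s - 1))"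
      unfolding a_def by (simp add: algebra_simps)
    moreover have "0 \<le> s * real k" using s by simp
    moreover have "s * j \<le> s * (2*real k + 3)" using j s by (intro mult_left_mono) auto
    ultimately have "s * j \<le> 3 * (a - 1)" using s by argo
    then show "1/(a - 1) \<le> (3/s)/j" using \<open>2 \<le> a\<close> s j by (simp add: field_simps)
  qed
  finally show ?thesis unfolding a_def .
qed

lemma density_le_digit_ratio_gt:
  assumes s: "s \<ge> 1"
  shows "density_le (3/s) {x. s * sengel_digit x < sengel_digit (sengel_map x)}"
proof (rule density_le_subset)
  define F where "F k = {y. s * (2 * (real k + 1)) < sengel_digit y}" for k :: nat
  have [measurable]: "F k \<in> sets borel" for k unfolding F_def by measurable
  show "density_le (3/s) {x. \<exists>k. sengel_digit x = 2 * (real k + 1) \<and> sengel_map x \<in> F k}"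
    unfolding F_def using s by (intro density_le_branch_preimage emeasure_digit_gt_le) auto
  show "{x. s * sengel_digit x < sengel_digit (sengel_map x)} \<inter> {0<..1}
      \<subseteq> {x. \<exists>k. sengel_digit x = 2 * (real k + 1) \<and> sengel_map x \<in> F k}"
    unfolding F_def using sengel_digit_exists by fastforce
qed measurable

lemma emeasure_digits_ratio_gt_le:
  assumes "s \<ge> 1"
  shows "emeasure lborel ({0<..1} \<inter> {x. s * sengel_digits n x < sengel_digits (Suc n) x}) \<le> ennreal (3/s)"
proof -
  have "density_le (3/s) {x. (sengel_map ^^ n) x \<in> {x. s * sengel_digit x < sengel_digit (sengel_map x)}}"
    using assms by (intro density_le_funpow density_le_digit_ratio_gt) auto
  moreover have "{x. (sengel_map ^^ n) x \<in> {x. s * sengel_digit x < sengel_digit (sengel_map x)}}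
      = {x. s * sengel_digits n x < sengel_digits (Suc n) x}"
    unfolding sengel_digits_def by (auto simp: funpow_Suc_right)
  ultimately have "emeasure lborel ({x. s * sengel_digits n x < sengel_digits (Suc n) x} \<inter> {0<..1/(2*real 0 + 1)})
      \<le> ennreal ((3/s)/(2*real 0 + 1))"
    unfolding density_le_def by metis
  then show ?thesis by (simp add: Int_commute)
qed

definition ratios_below :: "nat \<Rightarrow> real \<Rightarrow> real set" where
  "ratios_below n t = {x. \<forall>i<n. sengel_digits (Suc i) x < t * sengel_digits i x}"

lemma ratios_below_measurable [measurable]: "ratios_below n t \<in> sets borel"
  unfolding ratios_below_def by measurable

lemma ratios_below_Suc:
  "x \<in> ratios_below (Suc n) t \<longleftrightarrow>
     sengel_digit (sengel_map x) < t * sengel_digit x \<and> sengel_map x \<in> ratios_below n t"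
  unfolding ratios_below_def All_less_Suc2 sengel_digits_Suc
  by (simp add: sengel_digits_def)

lemma emeasure_digit_lt_le:
  fixes t j :: real and k :: nat
  assumes t: "t \<ge> 1" and j: "2*real k + 1 \<le> j" "j \<le> 2*real k + 3"
  shows "emeasure lborel ({0<..1/j} \<inter> {y. sengel_digit y < t * (2 * (real k + 1))}) \<le> ennreal ((1 - 1/(3*t))/j)"
proof -
  define b where "b = t * (2 * (real k + 1))"
  have b: "2*real k + 2 \<le> b" unfolding b_def using t by (simp add: mult_right_mono[of 1 t, simplified])
  have "{0<..1/j} \<inter> {y. sengel_digit y < b} \<subseteq> {1/(b + 1)<..1/j}"
  proof
    fix y assume y: "y \<in> {0<..1/j} \<inter> {y. sengel_digit y < b}"
    then have "1/y < b + 1" using sengel_digit_gt[of y] by auto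
    then show "y \<in> {1/(b + 1)<..1/j}" using y b by (auto simp: field_simps)
  qed
  then have "emeasure lborel ({0<..1/j} \<inter> {y. sengel_digit y < b}) \<le> emeasure lborel {1/(b + 1)<..1/j}"
    by (intro emeasure_mono) auto
  also have "\<dots> = ennreal (1/j - 1/(b + 1))"
    using j b by (simp add: frac_le)
  also have "\<dots> \<le> ennreal ((1 - 1/(3*t))/j)"
  proof (rule ennreal_leI)
    have "3 * t * (2*real k + 1) = (b + 1) + (4 * (t * real k) + (t - 1))"
      unfolding b_def by (simp add: algebra_simps)
    moreover have "0 \<le> t * real k" using t by simp
    ultimately have "b + 1 \<le> 3 * t * (2*real k + 1)" using t by argo
    also have "\<dots> \<le> 3 * t * j" using j t by simp
    finally have "b + 1 \<le> 3 * t * j" .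
    moreover have "0 < b + 1" "0 < j" using b j of_nat_0_le_iff[of k, where 'a=real] by linarith+
    ultimately have "1/(3*t*j) \<le> 1/(b + 1)" using t by (intro divide_left_mono) auto
    moreover have "(1 - 1/(3*t))/j = 1/j - 1/(3*t*j)" using j t by (simp add: field_simps)
    ultimately show "1/j - 1/(b + 1) \<le> (1 - 1/(3*t))/j" by linarith
  qed
  finally show ?thesis unfolding b_def .
qed

lemma Ioc_inter_digit_less:
  "{0<..1/(2*real i + 1)} \<inter> {y. sengel_digit y < b} = {0<..1/(2*real i + 1)} \<inter> digit_set {k. 2 * (real k + 1) < b}"
proof -
  have "y \<in> digit_set {k. 2 * (real k + 1) < b} \<longleftrightarrow> sengel_digit y < b"
    if y: "y \<in> {0<..1/(2*real i + 1)}" for y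
  proof -
    have "y \<in> {0<..1}" using y Ioc_inverse_odd_subset[of i] by blast
    then obtain k :: nat where "sengel_digit y = 2 * (real k + 1)"
      using sengel_digit_exists[of y] by auto
    then show ?thesis unfolding digit_set_def by auto
  qed
  then show ?thesis by blast
qed

text \<open>Given the digit \<open>2(k+1)\<close> of \<open>x\<close>, the next ratio is below \<open>t\<close> iff the digit of \<open>T x\<close> is below
  \<open>2(k+1)t\<close>, which forces \<open>T x > 1/(2(k+1)t + 1)\<close>; on the image intervals of level set \<open>k\<close>
  this has relative measure at most \<open>1 - 1/(3t)\<close> (\<open>emeasure_digit_lt_le\<close>).\<close>

lemma emeasure_ratios_below_le:
  fixes K :: "nat set" and i :: nat
  assumes t: "t \<ge> 1"
  shows "emeasure lborel ({0<..1/(2*real i + 1)} \<inter> ratios_below n t \<inter> digit_set K)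
    \<le> ennreal ((1 - 1/(3*t))^n) * emeasure lborel ({0<..1/(2*real i + 1)} \<inter> digit_set K)"
proof (induction n arbitrary: i K)
  case 0
  then show ?case by (simp add: ratios_below_def)
next
  case (Suc n)
  define q where "q = 1 - 1/(3*t)"
  have q: "0 \<le> q" unfolding q_def using t by (simp add: field_simps)
  define F where "F k = ratios_below n t \<inter> {y. sengel_digit y < t * (2 * (real k + 1))}" for k :: nat
  have [measurable]: "F k \<in> sets borel" for k unfolding F_def by measurable
  have F_bound: "emeasure lborel (F k \<inter> {0<..1/(2*real i' + 1)}) \<le> ennreal (q^Suc n / (2*real i' + 1))"
    if "k \<le> i'" "i' \<le> Suc k" for k i' :: nat
  proof -
    let ?J = "{0<..1/(2*real i' + 1)}" and ?K = "{k'. 2 * (real k' + 1) < t * (2 * (real k + 1))}"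
    have "F k \<inter> ?J = ?J \<inter> ratios_below n t \<inter> digit_set ?K"
      unfolding F_def using Ioc_inter_digit_less[of i' "t * (2 * (real k + 1))"] by blast
    then have "emeasure lborel (F k \<inter> ?J) \<le> ennreal (q^n) * emeasure lborel (?J \<inter> digit_set ?K)"
      using Suc.IH[of i' ?K] unfolding q_def by simp
    also have "?J \<inter> digit_set ?K = {0<..1/(2*real i' + 1)} \<inter> {y. sengel_digit y < t * (2 * (real k + 1))}"
      using Ioc_inter_digit_less[of i' "t * (2 * (real k + 1))"] by simp
    also have "ennreal (q^n) * emeasure lborel \<dots> \<le> ennreal (q^n) * ennreal (q / (2*real i' + 1))"
      unfolding q_def using that by (intro mult_left_mono emeasure_digit_lt_le t) auto
    also have "\<dots> = ennreal (q^Suc n / (2*real i' + 1))"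
      using q by (simp add: ennreal_mult[symmetric])
    finally show ?thesis .
  qed
  have "{0<..1/(2*real i + 1)} \<inter> ratios_below (Suc n) t \<inter> digit_set K \<subseteq>
      {0<..1/(2*real i + 1)} \<inter> {x. \<exists>k\<in>K. sengel_digit x = 2 * (real k + 1) \<and> sengel_map x \<in> F k}"
    unfolding F_def digit_set_def by (auto simp: ratios_below_Suc mult.commute)
  then have "emeasure lborel ({0<..1/(2*real i + 1)} \<inter> ratios_below (Suc n) t \<inter> digit_set K) \<le>
      emeasure lborel ({0<..1/(2*real i + 1)} \<inter> {x. \<exists>k\<in>K. sengel_digit x = 2 * (real k + 1) \<and> sengel_map x \<in> F k})"
    by (intro emeasure_mono) measurable
  also have "\<dots> \<le> ennreal (q^Suc n) * emeasure lborel ({0<..1/(2*real i + 1)} \<inter> digit_set K)"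
    using q F_bound[of k k for k] F_bound[of k "Suc k" for k]
    by (intro emeasure_branch_preimage_le) (auto simp: algebra_simps)
  finally show ?case unfolding q_def .
qed

lemma emeasure_ratios_below_Ioc_le:
  assumes "t \<ge> 1"
  shows "emeasure lborel ({0<..1} \<inter> ratios_below n t) \<le> ennreal ((1 - 1/(3*t))^n)"
  using emeasure_ratios_below_le[OF assms, of 0 n UNIV] unfolding digit_set_UNIV
  by (simp add: Int_commute Int_left_commute)

lemma AE_eventually_not_in:
  fixes A :: "nat \<Rightarrow> real set"
  assumes [measurable]: "\<And>n. A n \<in> sets lborel" and "\<And>n. A n \<subseteq> {0<..1}"
    and "\<forall>\<^sub>F n in sequentially. emeasure lborel (A n) \<le> ennreal (b n)"
    and "\<And>n. 0 \<le> b n" "summable b"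
  shows "AE x in lborel. \<forall>\<^sub>F n in sequentially. x \<notin> A n"
proof -
  have finite: "emeasure lborel (A n) < \<infinity>" for n
  proof -
    have "emeasure lborel (A n) \<le> emeasure lborel {0<..1::real}"
      by (rule emeasure_mono[OF assms(2)[of n]]) simp
    then show ?thesis by (simp add: le_less_trans)
  qed
  have "\<forall>\<^sub>F n in sequentially. norm (measure lborel (A n)) \<le> b n"
    using assms(3) by eventually_elim (simp add: measure_def enn2real_leI assms(4))
  then have "summable (\<lambda>n. measure lborel (A n))"
    using assms(5) by (rule summable_comparison_test_ev)
  then show ?thesis
    using borel_cantelli_AE1[OF assms(1) finite] by simp
qed

lemma AE_eventually_digits_ratio_le:
  assumes p: "p > 1"
  shows "AE x in lborel. x \<in> {0<..1} \<longrightarrow>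
    (\<forall>\<^sub>F n in sequentially. sengel_digits (Suc n) x \<le> real (Suc n) powr p * sengel_digits n x)"
proof -
  define A where "A n = {0<..1} \<inter> {x. real (Suc n) powr p * sengel_digits n x < sengel_digits (Suc n) x}" for n
  have "summable (\<lambda>n. real n powr (-p))" using p by (simp add: summable_real_powr_iff)
  then have "summable (\<lambda>n. 3 * real (Suc n) powr (-p))"
    by (subst summable_Suc_iff) (rule summable_mult)
  moreover have "emeasure lborel (A n) \<le> ennreal (3 * real (Suc n) powr (-p))" for n
    using emeasure_digits_ratio_gt_le[of "real (Suc n) powr p" n] p
    unfolding A_def by (simp add: powr_minus_divide ge_one_powr_ge_zero)
  ultimately have "AE x in lborel. \<forall>\<^sub>F n in sequentially. x \<notin> A n"
    by (intro AE_eventually_not_in[where b="\<lambda>n. 3 * real (Suc n) powr (-p)"]) (auto simp: A_def)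
  then show ?thesis
    by eventually_elim (auto simp: A_def not_less elim: eventually_mono)
qed

lemma AE_eventually_not_ratios_below:
  "AE x in lborel. x \<in> {0<..1} \<longrightarrow>
     (\<forall>\<^sub>F n in sequentially. x \<notin> ratios_below n (real n / (ln (real n))\<^sup>2))"
proof -
  define t where "t n = real n / (ln (real n))\<^sup>2" for n
  define A where "A n = {0<..1} \<inter> ratios_below n (t n)" for n
  have "\<forall>\<^sub>F n in sequentially. 1 \<le> t n" "\<forall>\<^sub>F n in sequentially. exp (- real n / (3 * t n)) \<le> real n powr (-2)"
    unfolding t_def by real_asymp+
  then have "\<forall>\<^sub>F n in sequentially. emeasure lborel (A n) \<le> ennreal (real n powr (-2))"
  proof eventually_elim
    case (elim n)
    then have t: "1 \<le> t n" by simp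
    have "(1 - 1/(3 * t n))^n \<le> exp (- 1/(3 * t n))^n"
      using t exp_ge_add_one_self[of "- 1/(3 * t n)"] by (intro power_mono) (auto simp: field_simps)
    also have "\<dots> = exp (- real n / (3 * t n))" by (simp add: exp_of_nat_mult[symmetric])
    also have "\<dots> \<le> real n powr (-2)" using elim by simp
    finally show ?case
      using emeasure_ratios_below_Ioc_le[OF t, of n] unfolding A_def
      by (meson ennreal_leI order_trans)
  qed
  then have "AE x in lborel. \<forall>\<^sub>F n in sequentially. x \<notin> A n"
    by (intro AE_eventually_not_in) (auto simp: A_def summable_real_powr_iff)
  then show ?thesis
    by eventually_elim (auto simp: A_def t_def elim: eventually_mono)
qed

lemma sengel_R_le_sengel_M: "k \<in> {1..n} \<Longrightarrow> sengel_R k x \<le> sengel_M n x"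
  unfolding sengel_M_def by (intro Max_ge) auto

lemma eventually_Max_image_le:
  fixes f g :: "nat \<Rightarrow> real"
  assumes "\<forall>\<^sub>F k in sequentially. f k \<le> g k" "mono g" "filterlim g at_top sequentially"
  shows "\<forall>\<^sub>F n in sequentially. Max (f ` {1..n}) \<le> g n"
proof -
  obtain N where N: "\<And>k. k \<ge> N \<Longrightarrow> f k \<le> g k"
    using assms(1) unfolding eventually_sequentially by blast
  have "\<forall>\<^sub>F n in sequentially. Max (f ` {1..N}) \<le> g n"
    using assms(3) by (simp add: filterlim_at_top)
  with eventually_ge_at_top[of "max 1 N"] show ?thesis
  proof eventually_elim
    case (elim n)
    have "f k \<le> g n" if "k \<in> {1..n}" for k
    proof (cases "k \<le> N")
      case True
      then have "f k \<le> Max (f ` {1..N})" using that by (intro Max_ge) auto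
      then show ?thesis using elim by linarith
    next
      case False
      then show ?thesis using N[of k] monoD[OF assms(2), of k n] that by force
    qed
    then show ?case using elim by (subst Max_le_iff) auto
  qed
qed

lemma AE_sengel_M_le:
  assumes p: "p > 1"
  shows "AE x in lborel. x \<in> {0<..<1} - \<rat> \<longrightarrow> (\<forall>\<^sub>F n in sequentially. sengel_M n x \<le> real n powr p)"
  using AE_eventually_digits_ratio_le[OF p]
proof eventually_elim
  case (elim x)
  show ?case
  proof
    assume x: "x \<in> {0<..<1} - \<rat>"
    have "\<forall>\<^sub>F n in sequentially. sengel_digits (Suc n) x \<le> real (Suc n) powr p * sengel_digits n x"
      using elim x by auto
    then have "\<forall>\<^sub>F n in sequentially. sengel_R (Suc (Suc n)) x \<le> real (Suc (Suc n)) powr p"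
    proof eventually_elim
      case (elim n)
      have "sengel_R (Suc (Suc n)) x \<le> real (Suc n) powr p"
        using elim sengel_digits_ge_2[OF x, of n] unfolding sengel_R_eq(2)[OF x]
        by (simp add: divide_le_eq)
      also have "\<dots> \<le> real (Suc (Suc n)) powr p" using p by (intro powr_mono2) auto
      finally show ?case .
    qed
    then have "\<forall>\<^sub>F k in sequentially. sengel_R k x \<le> real k powr p"
      using eventually_sequentially_Suc[of "\<lambda>k. sengel_R (Suc k) x \<le> real (Suc k) powr p"]
        eventually_sequentially_Suc[of "\<lambda>k. sengel_R k x \<le> real k powr p"] by blast
    moreover have "mono (\<lambda>k. real k powr p)" using p by (intro monoI powr_mono2) auto
    moreover have "filterlim (\<lambda>k. real k powr p) at_top sequentially" using p by real_asymp
    ultimately show "\<forall>\<^sub>F n in sequentially. sengel_M n x \<le> real n powr p"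
      unfolding sengel_M_def by (rule eventually_Max_image_le)
  qed
qed

lemma AE_sengel_M_ge:
  "AE x in lborel. x \<in> {0<..<1} - \<rat> \<longrightarrow> (\<forall>p<1. \<forall>\<^sub>F n in sequentially. real n powr p \<le> sengel_M n x)"
  using AE_eventually_not_ratios_below
proof eventually_elim
  case (elim x)
  show ?case
  proof (intro impI allI)
    fix p :: real assume x: "x \<in> {0<..<1} - \<rat>" and "p < 1"
    then have "\<forall>\<^sub>F n in sequentially. real (Suc n) powr p \<le> real n / (ln (real n))\<^sup>2"
      by real_asymp
    moreover have "\<forall>\<^sub>F n in sequentially. real n / (ln (real n))\<^sup>2 \<le> sengel_M (Suc n) x"
      using elim x
    proof (auto elim!: eventually_mono)
      fix n assume "x \<notin> ratios_below n (real n / (ln (real n))\<^sup>2)"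
      then obtain i where i: "i < n"
        "real n / (ln (real n))\<^sup>2 * sengel_digits i x \<le> sengel_digits (Suc i) x"
        unfolding ratios_below_def by (auto simp: not_less)
      then have "real n / (ln (real n))\<^sup>2 \<le> sengel_R (Suc (Suc i)) x"
        using sengel_digits_ge_2[OF x, of i] unfolding sengel_R_eq(2)[OF x]
        by (simp add: le_divide_eq)
      also have "\<dots> \<le> sengel_M (Suc n) x" using i by (intro sengel_R_le_sengel_M) auto
      finally show "real n / (ln (real n))\<^sup>2 \<le> sengel_M (Suc n) x" .
    qed
    ultimately have "\<forall>\<^sub>F n in sequentially. real (Suc n) powr p \<le> sengel_M (Suc n) x"
      by eventually_elim linarith
    then show "\<forall>\<^sub>F n in sequentially. real n powr p \<le> sengel_M n x"
      using eventually_sequentially_Suc[of "\<lambda>n. real n powr p \<le> sengel_M n x"] by blast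
  qed
qed

lemma tendsto_ln_div_ln_1:
  fixes M :: "nat \<Rightarrow> real"
  assumes lower: "\<And>m::nat. \<forall>\<^sub>F n in sequentially. real n powr (1 - 1/(real m + 1)) \<le> M n"
    and upper: "\<And>m::nat. \<forall>\<^sub>F n in sequentially. M n \<le> real n powr (1 + 1/(real m + 1))"
  shows "(\<lambda>n. ln (M n) / ln (real n)) \<longlonglongrightarrow> 1"
  unfolding tendsto_iff
proof (intro allI impI)
  fix e :: real assume "e > 0"
  obtain m :: nat where "1/e < real m" using reals_Archimedean2 by blast
  then have m: "1/(real m + 1) < e" using \<open>e > 0\<close> by (simp add: field_simps)
  show "\<forall>\<^sub>F n in sequentially. dist (ln (M n) / ln (real n)) 1 < e"
    using lower[of m] upper[of m] eventually_ge_at_top[of 2]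
  proof eventually_elim
    case (elim n)
    then have "0 < ln (real n)" by simp
    have "0 < real n powr (1 - 1/(real m + 1))" using elim(3) by simp
    then have "0 < M n" using elim(1) by linarith
    have "(1 - 1/(real m + 1)) * ln (real n) \<le> ln (M n)"
      using ln_mono[OF elim(1)] elim(3) by simp
    moreover have "ln (M n) \<le> (1 + 1/(real m + 1)) * ln (real n)"
      using ln_mono[OF elim(2) \<open>0 < M n\<close>] by simp
    ultimately have "\<bar>ln (M n) - ln (real n)\<bar> \<le> 1/(real m + 1) * ln (real n)"
      by (simp add: algebra_simps abs_le_iff)
    moreover have "ln (M n) / ln (real n) - 1 = (ln (M n) - ln (real n)) / ln (real n)"
      using \<open>0 < ln (real n)\<close> by (simp add: field_simps)
    ultimately have "\<bar>ln (M n) / ln (real n) - 1\<bar> \<le> 1/(real m + 1)"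
      using \<open>0 < ln (real n)\<close> by (simp add: divide_le_eq)
    then show ?case using m by (simp add: dist_real_def)
  qed
qed

theorem corollary1p9:
  shows "AE x in lebesgue. x \<in> {0<..<1} \<and> x \<notin> \<rat> \<longrightarrow>
           (\<lambda>n. ln (sengel_M n x) / ln (real n)) \<longlonglongrightarrow> 1"
proof -
  have "AE x in lborel. \<forall>m::nat. x \<in> {0<..<1} - \<rat> \<longrightarrow>
      (\<forall>\<^sub>F n in sequentially. sengel_M n x \<le> real n powr (1 + 1/(real m + 1)))"
    by (subst AE_all_countable) (intro allI AE_sengel_M_le, simp)
  with AE_sengel_M_ge
  have "AE x in lborel. x \<in> {0<..<1} \<and> x \<notin> \<rat> \<longrightarrow> (\<lambda>n. ln (sengel_M n x) / ln (real n)) \<longlonglongrightarrow> 1"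
  proof eventually_elim
    case (elim x)
    show ?case
    proof
      assume "x \<in> {0<..<1} \<and> x \<notin> \<rat>"
      with elim show "(\<lambda>n. ln (sengel_M n x) / ln (real n)) \<longlonglongrightarrow> 1"
        by (intro tendsto_ln_div_ln_1) auto
    qed
  qed
  then show ?thesis by (rule AE_completion)
qed

end
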